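(* Let $(A_1,\dots,A_n)$ and $(B_1,\dots,B_m)$ be nonempty sequences of words, and let $(g_1,\dots,g_r)$ and $(h_1,\dots,h_t)$ be the $n$-bounded, respectively $m$-bounded, index collections maximal for them. Let $k=\max(\{0\}\cup\{i\mid 1\le i\le r,\ B_{h_1}\precsim A_{g_i}\})$. Then the $(n+m)$-bounded index collection $(g_1,\dots,g_k,n+h_1,\dots,n+h_t)$ is maximal for the sequence $(A_1,\dots,A_n,B_1,\dots,B_m)$.
   Context: Words are finite strings over $\mathbb{N}$; $\Lambda$ is the empty word. For $k\in\mathbb{N}$, $\mathsf{S}_k$ is the set of words all of whose symbols are $\ge k$. Given a linear preorder $\precsim$ with $A\sim B$ iff $A\precsim B\wedge B\precsim A$ and $A\prec B$ iff $A\precsim B\wedge\neg B\precsim A$, a finite sequence $(A_1,\dots,A_p)$ is lexicographically not greater than $(B_1,\dots,B_q)$ iff either $p\le q$ and $A_i\sim B_i$ for all $i\le p$, or there is $s<\min(p,q)$ with $A_i\sim B_i$ for $i\le s$ and $A_{s+1}\prec B_{s+1}$. A lexicographically maximal subsequence of a finite sequence is a subsequence that is lexicographically not less than every subsequence. The linear preorder $\precsim$ on words is defined by recursion on (largest symbol of $AB$) $-$ (smallest symbol of $AB$): $\Lambda\precsim\Lambda$; if $AB$ is nonempty with minimal symbol $n$, write uniquely $A=A_1n\cdots nA_k$, $B=B_1n\cdots nB_l$ ($k,l\ge1$) with $A_i,B_j\in\mathsf{S}_{n+1}$ (possibly empty); let $C,D$ be lexicographically maximal subsequences of $(A_1,\dots,A_k)$,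 $(B_1,\dots,B_l)$; then $A\precsim B$ iff $C$ is lexicographically not greater than $D$. An index collection is a strictly increasing finite sequence of positive integers; it is $n$-bounded if all entries are $\le n$; it is maximal for $(A_1,\dots,A_n)$ if $(A_{s_1},\dots,A_{s_m})$ is a lexicographically maximal subsequence of $(A_1,\dots,A_n)$. For a nonempty sequence there is exactly one maximal index collection. *)

theory Defs
  imports Main "HOL-Library.Sublist"
begin

definition pequiv :: "('a \<Rightarrow> 'a \<Rightarrow> bool) \<Rightarrow> 'a \<Rightarrow> 'a \<Rightarrow> bool" where
  "pequiv le a b \<longleftrightarrow> le a b \<and> le b a"

definition pstrict :: "('a \<Rightarrow> 'a \<Rightarrow> bool) \<Rightarrow> 'a \<Rightarrow> 'a \<Rightarrow> bool" where
  "pstrict le a b \<longleftrightarrow> le a b \<and> \<not> le b a"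

definition lex_le :: "('a \<Rightarrow> 'a \<Rightarrow> bool) \<Rightarrow> 'a list \<Rightarrow> 'a list \<Rightarrow> bool" where
  "lex_le le xs ys \<longleftrightarrow>
     (length xs \<le> length ys \<and> (\<forall>i<length xs. pequiv le (xs ! i) (ys ! i))) \<or>
     (\<exists>s<min (length xs) (length ys).
        (\<forall>i<s. pequiv le (xs ! i) (ys ! i)) \<and> pstrict le (xs ! s) (ys ! s))"

definition lex_max_subseq :: "('a \<Rightarrow> 'a \<Rightarrow> bool) \<Rightarrow> 'a list \<Rightarrow> 'a list \<Rightarrow> bool" where
  "lex_max_subseq le C xs \<longleftrightarrow> subseq C xs \<and> (\<forall>D. subseq D xs \<longrightarrow> lex_le le D C)"

text \<open>Splitting a word at every occurrence of the symbol n: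
  A = A_1 n A_2 n ... n A_k, giving [A_1, ..., A_k] (k \<ge> 1).\<close>
fun split_sym :: "nat \<Rightarrow> nat list \<Rightarrow> nat list list" where
  "split_sym n [] = [[]]"
| "split_sym n (x # xs) =
     (let r = split_sym n xs in if x = n then [] # r else (x # hd r) # tl r)"

text \<open>The preorder on words, by recursion with a fuel parameter; the fuel
  length (A @ B) always suffices since all pieces compared are strictly shorter.\<close>
fun wle :: "nat \<Rightarrow> nat list \<Rightarrow> nat list \<Rightarrow> bool" where
  "wle 0 A B = True"
| "wle (Suc f) A B =
     (if A @ B = [] then True
      else (let n = Min (set (A @ B)); P = split_sym n A; Q = split_sym n B in
            \<forall>C D. lex_max_subseq (wle f) C P \<longrightarrow> lex_max_subseq (wle f) D Q \<longrightarrow>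
                   lex_le (wle f) C D))"

definition word_le :: "nat list \<Rightarrow> nat list \<Rightarrow> bool" where
  "word_le A B = wle (length (A @ B)) A B"

text \<open>Index collections (1-based indices).\<close>
definition index_collection :: "nat list \<Rightarrow> bool" where
  "index_collection s \<longleftrightarrow> sorted_wrt (<) s \<and> (\<forall>x\<in>set s. 0 < x)"

definition bounded_ic :: "nat \<Rightarrow> nat list \<Rightarrow> bool" where
  "bounded_ic n s \<longleftrightarrow> index_collection s \<and> (\<forall>x\<in>set s. x \<le> n)"

definition maximal_ic :: "('a \<Rightarrow> 'a \<Rightarrow> bool) \<Rightarrow> nat list \<Rightarrow> 'a list \<Rightarrow> bool" where
  "maximal_ic le s As \<longleftrightarrow> bounded_ic (length As) s \<and>
     lex_max_subseq le (map (\<lambda>i. As ! (i - 1)) s) As"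

end

theory Submission
  imports Defs
begin

text \<open>A lexicographically maximal subsequence is non-increasing and starts with a greatest
  element. Let \<open>\<beta>\<close> be the first term of the maximal subsequence \<open>G\<^sub>B\<close> of the \<open>B\<close>'s, so every
  \<open>B\<^sub>j \<precsim> \<beta>\<close>; the first \<open>k\<close> terms of the maximal subsequence \<open>G\<^sub>A\<close> of the \<open>A\<close>'s are \<open>\<succsim> \<beta>\<close>
  and the next one is \<open>\<prec> \<beta>\<close>. A subsequence \<open>D\<^sub>A @ D\<^sub>B\<close> of the concatenation has \<open>D\<^sub>A\<close>
  lexicographically below \<open>G\<^sub>A\<close>. If \<open>D\<^sub>A\<close> leaves the first \<open>k\<close> terms of \<open>G\<^sub>A\<close> strictly below,
  or passes them and continues below \<open>\<beta>\<close>, it already loses against the candidate; if it stops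
  earlier, it is continued by terms \<open>\<precsim> \<beta>\<close> of \<open>D\<^sub>B\<close>, which lose as well. All of this needs \<open>\<precsim>\<close>
  to be a total preorder, which is proved by induction on the length of the words.\<close>

section \<open>Lexicographic comparison\<close>

lemma lex_le_Nil [simp]: "lex_le le [] ys"
  by (simp add: lex_le_def)

lemma lex_le_Cons_Nil [simp]: "\<not> lex_le le (x # xs) []"
  by (simp add: lex_le_def)

lemma lex_le_Cons_Cons [simp]:
  "lex_le le (x # xs) (y # ys) \<longleftrightarrow> pstrict le x y \<or> pequiv le x y \<and> lex_le le xs ys"
  by (auto simp: lex_le_def All_less_Suc2 Ex_less_Suc2)

lemma lex_le_append_left_cancel:
  "\<forall>p\<in>set P. le p p \<Longrightarrow> lex_le le (P @ X) (P @ Y) \<longleftrightarrow> lex_le le X Y"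
  by (induction P) (auto simp: pequiv_def pstrict_def)

lemma lex_le_cong:
  assumes "\<forall>a\<in>S. \<forall>b\<in>S. le1 a b = le2 a b" "set xs \<subseteq> S" "set ys \<subseteq> S"
  shows "lex_le le1 xs ys = lex_le le2 xs ys"
  using assms(2,3)
proof (induction xs arbitrary: ys)
  case (Cons x xs)
  then show ?case
    using assms(1) by (cases ys) (auto simp: pstrict_def pequiv_def)
qed simp

definition total_preorder_on :: "'a set \<Rightarrow> ('a \<Rightarrow> 'a \<Rightarrow> bool) \<Rightarrow> bool" where
  "total_preorder_on S le \<longleftrightarrow> (\<forall>x\<in>S. \<forall>y\<in>S. le x y \<or> le y x) \<and>
     (\<forall>x\<in>S. \<forall>y\<in>S. \<forall>z\<in>S. le x y \<longrightarrow> le y z \<longrightarrow> le x z)"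

lemma total_preorder_on_total:
  "total_preorder_on S le \<Longrightarrow> x \<in> S \<Longrightarrow> y \<in> S \<Longrightarrow> le x y \<or> le y x"
  unfolding total_preorder_on_def by blast

lemma total_preorder_on_refl: "total_preorder_on S le \<Longrightarrow> x \<in> S \<Longrightarrow> le x x"
  unfolding total_preorder_on_def by blast

lemma total_preorder_on_trans:
  "total_preorder_on S le \<Longrightarrow> x \<in> S \<Longrightarrow> y \<in> S \<Longrightarrow> z \<in> S \<Longrightarrow> le x y \<Longrightarrow> le y z \<Longrightarrow> le x z"
  unfolding total_preorder_on_def by blast

lemma lex_le_total:
  assumes "total_preorder_on S le" "set xs \<subseteq> S" "set ys \<subseteq> S"
  shows "lex_le le xs ys \<or> lex_le le ys xs"
  using assms(2,3)
proof (induction xs arbitrary: ys)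
  case (Cons x xs)
  then show ?case
    using assms(1) by (cases ys) (auto simp: total_preorder_on_def pequiv_def pstrict_def)
qed simp

lemma lex_le_trans:
  assumes "total_preorder_on S le" "set xs \<subseteq> S" "set ys \<subseteq> S" "set zs \<subseteq> S"
    and "lex_le le xs ys" "lex_le le ys zs"
  shows "lex_le le xs zs"
  using assms(2-)
proof (induction xs arbitrary: ys zs)
  case (Cons x xs)
  obtain y ys' z zs' where yz: "ys = y # ys'" "zs = z # zs'"
    using Cons.prems(4,5) by (cases ys; cases zs) simp_all
  have "x \<in> S" "y \<in> S" "z \<in> S"
    using Cons.prems yz by auto
  then have "le x y \<Longrightarrow> le y z \<Longrightarrow> le x z" "le y z \<Longrightarrow> le z x \<Longrightarrow> le y x"
      "le z x \<Longrightarrow> le x y \<Longrightarrow> le z y" "le z y \<Longrightarrow> le y x \<Longrightarrow> le z x"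
    using assms(1) unfolding total_preorder_on_def by blast+
  moreover have "lex_le le xs ys' \<Longrightarrow> lex_le le ys' zs' \<Longrightarrow> lex_le le xs zs'"
    using Cons.IH[of ys' zs'] Cons.prems(1-3) yz by simp
  ultimately have "pstrict le x z \<or> pequiv le x z \<and> lex_le le xs zs'"
    using Cons.prems(4,5) unfolding yz lex_le_Cons_Cons pstrict_def pequiv_def by blast
  then show ?case
    using yz by simp
qed simp

section \<open>Lexicographically maximal subsequences\<close>

lemma set_mono_subseq: "subseq xs ys \<Longrightarrow> set xs \<subseteq> set ys"
  by (induction rule: list_emb.induct) auto

lemma lex_max_subseq_ne:
  assumes "lex_max_subseq le C xs" "xs \<noteq> []"
  shows "C \<noteq> []"
proof -
  have "lex_le le [hd xs] C"
    using assms by (simp add: lex_max_subseq_def subseq_singleton_left)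
  then show ?thesis by auto
qed

lemma lex_max_subseq_hd_greatest:
  assumes "lex_max_subseq le C xs" "b \<in> set xs"
  shows "le b (hd C)"
proof -
  have "lex_le le [b] C"
    using assms by (simp add: lex_max_subseq_def subseq_singleton_left)
  then show ?thesis by (cases C) (auto simp: pequiv_def pstrict_def)
qed

lemma lex_max_subseq_nonincreasing:
  assumes refl: "\<And>x. le x x" and C: "lex_max_subseq le C xs" and "i < j" "j < length C"
  shows "le (C ! j) (C ! i)"
proof -
  define D where "D = take i C @ drop j C"
  have "subseq (drop j C) (drop i C)"
    using \<open>i < j\<close> suffix_drop[of "j - i" "drop i C"] by (simp add: suffix_imp_subseq)
  then have "subseq D (take i C @ drop i C)"
    unfolding D_def by (rule list_emb_append_mono[OF subseq_order.refl])
  then have "subseq D xs"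
    using C by (auto simp: lex_max_subseq_def)
  then have "lex_le le (take i C @ (C ! j # drop (Suc j) C)) (take i C @ (C ! i # drop (Suc i) C))"
    using C assms(3,4) by (simp add: lex_max_subseq_def D_def Cons_nth_drop_Suc)
  then show ?thesis
    using refl by (auto simp: lex_le_append_left_cancel pstrict_def pequiv_def)
qed

lemma lex_max_subseq_cong:
  assumes "\<forall>a\<in>S. \<forall>b\<in>S. le1 a b = le2 a b" "set P \<subseteq> S"
  shows "lex_max_subseq le1 C P = lex_max_subseq le2 C P"
proof -
  have "lex_le le1 D C = lex_le le2 D C" if "subseq D P" "subseq C P" for D
  proof (rule lex_le_cong[OF assms(1)])
    show "set D \<subseteq> S" "set C \<subseteq> S"
      using that assms(2) set_mono_subseq by blast+
  qed
  then show ?thesis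
    unfolding lex_max_subseq_def by blast
qed

definition lex_le_max_subseqs :: "('a \<Rightarrow> 'a \<Rightarrow> bool) \<Rightarrow> 'a list \<Rightarrow> 'a list \<Rightarrow> bool" where
  "lex_le_max_subseqs le P Q \<longleftrightarrow>
     (\<forall>C D. lex_max_subseq le C P \<longrightarrow> lex_max_subseq le D Q \<longrightarrow> lex_le le C D)"

lemma lex_le_max_subseqs_cong:
  assumes "\<forall>a\<in>set P \<union> set Q. \<forall>b\<in>set P \<union> set Q. le1 a b = le2 a b"
  shows "lex_le_max_subseqs le1 P Q = lex_le_max_subseqs le2 P Q"
proof -
  have max_eq: "lex_max_subseq le1 C P = lex_max_subseq le2 C P"
      "lex_max_subseq le1 D Q = lex_max_subseq le2 D Q" for C D
    using assms by (auto intro!: lex_max_subseq_cong[of "set P \<union> set Q"])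
  have "lex_le le1 C D = lex_le le2 C D"
    if "lex_max_subseq le2 C P" "lex_max_subseq le2 D Q" for C D
  proof (rule lex_le_cong[OF assms])
    show "set C \<subseteq> set P \<union> set Q" "set D \<subseteq> set P \<union> set Q"
      using that set_mono_subseq unfolding lex_max_subseq_def by blast+
  qed
  then show ?thesis
    unfolding lex_le_max_subseqs_def max_eq by blast
qed

fun suffix_maxima :: "('a \<Rightarrow> 'a \<Rightarrow> bool) \<Rightarrow> 'a list \<Rightarrow> 'a list" where
  "suffix_maxima le [] = []"
| "suffix_maxima le (x # xs) =
     (if \<forall>y\<in>set xs. le y x then x # suffix_maxima le xs else suffix_maxima le xs)"

lemma subseq_suffix_maxima: "subseq (suffix_maxima le xs) xs"
  by (induction xs) auto

lemma set_suffix_maxima: "set (suffix_maxima le xs) \<subseteq> set xs"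
  by (induction xs) auto

lemma suffix_maxima_hd_greatest:
  assumes "total_preorder_on S le" "set xs \<subseteq> S" "y \<in> set xs"
  shows "suffix_maxima le xs \<noteq> [] \<and> le y (hd (suffix_maxima le xs))"
  using assms(2,3)
proof (induction xs arbitrary: y)
  case (Cons x xs)
  show ?case
  proof (cases "\<forall>y\<in>set xs. le y x")
    case True
    have "le x x"
      using total_preorder_on_refl[OF assms(1)] Cons.prems(1) by simp
    then show ?thesis
      using True Cons.prems(2) by auto
  next
    case False
    then obtain z where z: "z \<in> set xs" "\<not> le z x" by blast
    let ?h = "hd (suffix_maxima le xs)"
    have IH: "suffix_maxima le xs \<noteq> []" "\<And>y. y \<in> set xs \<Longrightarrow> le y ?h"
      using Cons.IH Cons.prems(1) z(1) by simp_all
    have "?h \<in> set xs"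
      using hd_in_set[OF IH(1)] set_suffix_maxima[of le xs] by blast
    then have S: "?h \<in> S" "x \<in> S" "z \<in> S"
      using Cons.prems(1) z(1) by auto
    then have "le x z"
      using total_preorder_on_total[OF assms(1) S(2,3)] z(2) by blast
    then have "le x ?h"
      using total_preorder_on_trans[OF assms(1) S(2,3,1)] IH(2)[OF z(1)] by blast
    then show ?thesis
      using False IH Cons.prems(2) by auto
  qed
qed simp

lemma lex_max_subseq_suffix_maxima:
  assumes "total_preorder_on S le" "set xs \<subseteq> S"
  shows "lex_max_subseq le (suffix_maxima le xs) xs"
  unfolding lex_max_subseq_def
proof (intro conjI subseq_suffix_maxima allI impI)
  fix D assume "subseq D xs"
  with assms(2) show "lex_le le D (suffix_maxima le xs)"
  proof (induction xs arbitrary: D)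
    case (Cons x xs)
    have x: "x \<in> S" and xs: "set xs \<subseteq> S"
      using Cons.prems(1) by simp_all
    have IH: "subseq E xs \<Longrightarrow> lex_le le E (suffix_maxima le xs)" for E
      using Cons.IH[OF xs] .
    show ?case
    proof (cases "\<forall>y\<in>set xs. le y x")
      case True
      have "lex_le le D (x # suffix_maxima le xs)"
      proof (cases D)
        case (Cons d D')
        then have sub: "if d = x then subseq D' xs else subseq (d # D') xs"
          using \<open>subseq D (x # xs)\<close> by simp
        then have "lex_le le D' (suffix_maxima le xs)"
          using IH subseq_Cons' by (metis (full_types))
        moreover have d: "d = x \<or> d \<in> set xs"
          using sub set_mono_subseq[of "d # D'" xs] by (auto split: if_splits)
        moreover have "le d x"
          using d True total_preorder_on_refl[OF assms(1) x] by blast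
        ultimately show ?thesis
          using Cons by (auto simp: pequiv_def pstrict_def)
      qed simp
      with True show ?thesis by simp
    next
      case False
      then obtain y where y: "y \<in> set xs" "\<not> le y x" by blast
      let ?h = "hd (suffix_maxima le xs)"
      have h: "suffix_maxima le xs \<noteq> []" "le y ?h"
        using suffix_maxima_hd_greatest[OF assms(1) xs y(1)] by simp_all
      have "?h \<in> set xs"
        using hd_in_set[OF h(1)] set_suffix_maxima[of le xs] by blast
      then have S: "?h \<in> S" "x \<in> S" "y \<in> S"
        using xs x y(1) by auto
      have "le x y"
        using total_preorder_on_total[OF assms(1) S(2,3)] y(2) by blast
      then have "le x ?h"
        using total_preorder_on_trans[OF assms(1) S(2,3,1)] h(2) by blast
      moreover have "\<not> le ?h x"
        using total_preorder_on_trans[OF assms(1) S(3,1,2)] h(2) y(2) by blast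
      ultimately have strict: "pstrict le x ?h"
        by (simp add: pstrict_def)
      have "suffix_maxima le (x # xs) = suffix_maxima le xs"
        using False by simp
      moreover have "lex_le le D (suffix_maxima le xs)"
      proof (cases "subseq D xs")
        case True
        then show ?thesis
          using IH by simp
      next
        case not_sub: False
        then obtain D' where "D = x # D'"
          using \<open>subseq D (x # xs)\<close> by (cases D) (auto split: if_splits)
        then show ?thesis
          using strict h(1) by (cases "suffix_maxima le xs") simp_all
      qed
      ultimately show ?thesis by simp
    qed
  qed (auto dest: list_emb_Nil2)
qed

lemma lex_le_max_subseqs_iff_suffix_maxima:
  assumes "total_preorder_on S le" "set P \<subseteq> S" "set Q \<subseteq> S"
  shows "lex_le_max_subseqs le P Q \<longleftrightarrow> lex_le le (suffix_maxima le P) (suffix_maxima le Q)"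
    (is "_ \<longleftrightarrow> lex_le le ?P ?Q")
proof
  assume "lex_le_max_subseqs le P Q"
  then show "lex_le le ?P ?Q"
    using lex_max_subseq_suffix_maxima[OF assms(1,2)] lex_max_subseq_suffix_maxima[OF assms(1,3)]
    unfolding lex_le_max_subseqs_def by blast
next
  assume PQ: "lex_le le ?P ?Q"
  show "lex_le_max_subseqs le P Q"
    unfolding lex_le_max_subseqs_def
  proof (intro allI impI)
    fix C D assume C: "lex_max_subseq le C P" and D: "lex_max_subseq le D Q"
    have CP: "lex_le le C ?P" and QD: "lex_le le ?Q D"
      using C D lex_max_subseq_suffix_maxima[OF assms(1,2)] lex_max_subseq_suffix_maxima[OF assms(1,3)]
      unfolding lex_max_subseq_def by blast+
    have C_S: "set C \<subseteq> S" and D_S: "set D \<subseteq> S"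
      using C D assms(2,3) unfolding lex_max_subseq_def by (meson order_trans set_mono_subseq)+
    have P_S: "set ?P \<subseteq> S" and Q_S: "set ?Q \<subseteq> S"
      using assms(2,3) set_suffix_maxima by (meson order_trans)+
    have "lex_le le C ?Q"
      using lex_le_trans[OF assms(1) C_S P_S Q_S CP PQ] .
    then show "lex_le le C D"
      using lex_le_trans[OF assms(1) C_S Q_S D_S _ QD] by blast
  qed
qed

section \<open>The preorder on words\<close>

lemma split_sym_ne [simp]: "split_sym n A \<noteq> []"
  by (induction A) (auto simp: Let_def)

lemma split_sym_notin: "n \<notin> set A \<Longrightarrow> split_sym n A = [A]"
  by (induction A) (auto simp: Let_def)

lemma sum_length_split_sym:
  "sum_list (map length (split_sym n A)) + length (filter ((=) n) A) = length A"
proof (induction A)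
  case (Cons x A)
  then show ?case
    by (cases "split_sym n A") (auto simp: Let_def)
qed simp

lemma wle_refl: "wle f X X"
  by (cases f) (auto simp: Let_def lex_max_subseq_def)

lemma word_le_refl: "word_le X X"
  by (simp add: word_le_def wle_refl)

lemma sum_le_sum_list:
  fixes f :: "'a \<Rightarrow> nat"
  shows "X \<subseteq> set W \<Longrightarrow> sum f X \<le> sum_list (map f W)"
proof (induction W arbitrary: X)
  case (Cons w W)
  have "finite X"
    using Cons.prems finite_subset by blast
  then have "sum f X \<le> f w + sum f (X - {w})"
    by (cases "w \<in> X") (simp_all add: sum.remove)
  moreover have "sum f (X - {w}) \<le> sum_list (map f W)"
    using Cons.IH[of "X - {w}"] Cons.prems by auto
  ultimately show ?case by simp
qed simp

lemma length_pieces_less: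
  assumes "n \<in> set (A @ B)" and "a \<in> set (split_sym n A @ split_sym n B)"
    and "b \<in> set (split_sym n A @ split_sym n B)" and "a \<noteq> b"
  shows "length a + length b < length (A @ B)"
proof -
  have "length a + length b \<le> sum_list (map length (split_sym n A @ split_sym n B))"
    using sum_le_sum_list[of "{a, b}" "split_sym n A @ split_sym n B" length] assms(2-4) by simp
  moreover have "0 < length (filter ((=) n) A) + length (filter ((=) n) B)"
    using assms(1) by (auto simp: filter_empty_conv)
  ultimately show ?thesis
    using sum_length_split_sym[of n A] sum_length_split_sym[of n B]
    by (simp only: length_append map_append sum_list_append)
qed

lemma lex_le_max_subseqs_split_sym_cong:
  assumes "n \<in> set (A @ B)" and "\<And>a. le1 a a = le2 a a"
    and "\<And>a b. length a + length b < length (A @ B) \<Longrightarrow> le1 a b = le2 a b"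
  shows "lex_le_max_subseqs le1 (split_sym n A) (split_sym n B)
    = lex_le_max_subseqs le2 (split_sym n A) (split_sym n B)"
proof (rule lex_le_max_subseqs_cong, intro ballI)
  fix a b assume "a \<in> set (split_sym n A) \<union> set (split_sym n B)"
    and "b \<in> set (split_sym n A) \<union> set (split_sym n B)"
  then show "le1 a b = le2 a b"
    using length_pieces_less[OF assms(1), of a b] assms(2,3) by (cases "a = b") auto
qed

lemma wle_Suc_split_sym:
  assumes "A @ B \<noteq> []"
  shows "wle (Suc f) A B =
    lex_le_max_subseqs (wle f) (split_sym (Min (set (A @ B))) A) (split_sym (Min (set (A @ B))) B)"
  by (simp only: wle.simps if_not_P[OF assms] Let_def lex_le_max_subseqs_def)

lemma wle_Suc_eq: "length (A @ B) \<le> f \<Longrightarrow> wle (Suc f) A B = wle f A B"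
proof (induction f arbitrary: A B)
  case (Suc f)
  show ?case
  proof (cases "A @ B = []")
    case False
    then have "Min (set (A @ B)) \<in> set (A @ B)"
      by (intro Min_in) simp_all
    then show ?thesis
      unfolding wle_Suc_split_sym[OF False]
      by (rule lex_le_max_subseqs_split_sym_cong) (use Suc in \<open>simp_all add: wle_refl\<close>)
  qed simp
qed simp

lemma wle_eq_word_le:
  assumes "length (A @ B) \<le> f"
  shows "wle f A B = word_le A B"
  using assms
proof (induction f rule: dec_induct)
  case base
  then show ?case by (simp add: word_le_def)
next
  case (step g)
  then show ?case
    using wle_Suc_eq[of A B g] by simp
qed

lemma word_le_split_sym:
  assumes "x @ y \<noteq> []"
  shows "word_le x y \<longleftrightarrow>
    lex_le_max_subseqs word_le (split_sym (Min (set (x @ y))) x) (split_sym (Min (set (x @ y))) y)"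
proof -
  obtain f where f: "length (x @ y) = Suc f"
    using assms by (cases "length (x @ y)") auto
  have n: "Min (set (x @ y)) \<in> set (x @ y)"
    using assms by (intro Min_in) simp_all
  have "word_le x y = wle (Suc f) x y"
    unfolding word_le_def f ..
  also have "\<dots> = lex_le_max_subseqs (wle f)
      (split_sym (Min (set (x @ y))) x) (split_sym (Min (set (x @ y))) y)"
    by (rule wle_Suc_split_sym[OF assms])
  also have "\<dots> = lex_le_max_subseqs word_le
      (split_sym (Min (set (x @ y))) x) (split_sym (Min (set (x @ y))) y)"
    by (rule lex_le_max_subseqs_split_sym_cong[OF n])
      (use f in \<open>simp_all add: wle_refl word_le_refl wle_eq_word_le\<close>)
  finally show ?thesis .
qed

text \<open>Any lower bound \<open>m\<close> of the symbols serves as well as their minimum, so that one \<open>m\<close>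
  can be used for three words at once: if \<open>m\<close> does not occur, both words are single pieces.\<close>

lemma word_le_iff_lex_le_suffix_maxima:
  assumes "\<forall>s\<in>set (x @ y). m \<le> s" and "total_preorder_on S word_le"
    and "set (split_sym m x) \<subseteq> S" and "set (split_sym m y) \<subseteq> S"
  shows "word_le x y \<longleftrightarrow>
    lex_le word_le (suffix_maxima word_le (split_sym m x)) (suffix_maxima word_le (split_sym m y))"
proof (cases "m \<in> set (x @ y)")
  case True
  then have "x @ y \<noteq> []" and "Min (set (x @ y)) = m"
    using assms(1) by (auto intro: Min_eqI)
  then show ?thesis
    using word_le_split_sym[of x y] lex_le_max_subseqs_iff_suffix_maxima[OF assms(2-4)] by simp
next
  case False
  then show ?thesis
    by (auto simp: split_sym_notin pequiv_def pstrict_def)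
qed

lemma total_preorder_on_short_words:
  assumes IH: "\<And>x y z. length x + length y + length z < N \<Longrightarrow>
      (word_le x y \<or> word_le y x) \<and> (word_le x y \<longrightarrow> word_le y z \<longrightarrow> word_le x z)"
    and short: "sum_list (map length W) < N"
  shows "total_preorder_on (set W) word_le"
  unfolding total_preorder_on_def
proof (intro conjI ballI impI)
  fix a b assume "a \<in> set W" "b \<in> set W"
  show "word_le a b \<or> word_le b a"
  proof (cases "a = b")
    case False
    then have "length a + length b + length ([] :: nat list) < N"
      using sum_le_sum_list[of "{a, b}" W length] \<open>a \<in> set W\<close> \<open>b \<in> set W\<close> short by simp
    then show ?thesis
      using IH[of a b "[]"] by blast
  qed (simp add: word_le_refl)
next
  fix a b c assume "a \<in> set W" "b \<in> set W" "c \<in> set W" "word_le a b" "word_le b c"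
  then show "word_le a c"
  proof (cases "a = b \<or> b = c \<or> a = c")
    case False
    then have "length a + length b + length c < N"
      using sum_le_sum_list[of "{a, b, c}" W length] \<open>a \<in> set W\<close> \<open>b \<in> set W\<close> \<open>c \<in> set W\<close> short
      by simp
    then show ?thesis
      using IH[of a b c] \<open>word_le a b\<close> \<open>word_le b c\<close> by blast
  qed (auto simp: word_le_refl)
qed

text \<open>Induction on the total length: splitting at the smallest symbol yields pieces on which,
  by induction, \<open>word_le\<close> is already a total preorder, and so is its lexicographic extension.\<close>

lemma word_le_total_and_trans:
  "(word_le x y \<or> word_le y x) \<and> (word_le x y \<longrightarrow> word_le y z \<longrightarrow> word_le x z)"
proof (induction "length x + length y + length z" arbitrary: x y z rule: less_induct)
  case less
  show ?case
  proof (cases "x @ y @ z = []")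
    case False
    define m where "m = Min (set (x @ y @ z))"
    define W where "W = split_sym m x @ split_sym m y @ split_sym m z"
    have "m \<in> set (x @ y @ z)"
      unfolding m_def using False by (intro Min_in) simp_all
    then have "0 < length (filter ((=) m) x) + length (filter ((=) m) y) + length (filter ((=) m) z)"
      by (auto simp: filter_empty_conv)
    then have "sum_list (map length W) < length x + length y + length z"
      using sum_length_split_sym[of m x] sum_length_split_sym[of m y] sum_length_split_sym[of m z]
      unfolding W_def by (simp only: map_append sum_list_append)
    then have tp: "total_preorder_on (set W) word_le"
      using less by (rule total_preorder_on_short_words[rotated])
    let ?M = "\<lambda>w. suffix_maxima word_le (split_sym m w)"
    have "set (?M w) \<subseteq> set W" if "w \<in> {x, y, z}" for w
      using that set_suffix_maxima[of word_le "split_sym m w"] unfolding W_def by auto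
    then have Mx: "set (?M x) \<subseteq> set W" and My: "set (?M y) \<subseteq> set W" and Mz: "set (?M z) \<subseteq> set W"
      by simp_all
    have iff: "word_le u v \<longleftrightarrow> lex_le word_le (?M u) (?M v)" if "u \<in> {x, y, z}" "v \<in> {x, y, z}" for u v
    proof (rule word_le_iff_lex_le_suffix_maxima[OF _ tp])
      show "\<forall>s\<in>set (u @ v). m \<le> s"
        using that unfolding m_def by auto
      show "set (split_sym m u) \<subseteq> set W" "set (split_sym m v) \<subseteq> set W"
        using that unfolding W_def by auto
    qed
    then show ?thesis
      using iff[of x y] iff[of y x] iff[of y z] iff[of x z]
        lex_le_total[OF tp Mx My] lex_le_trans[OF tp Mx My Mz] by simp
  qed (simp add: word_le_refl)
qed

lemma word_le_total: "word_le x y \<or> word_le y x"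
  using word_le_total_and_trans[of x y "[]"] by blast

lemma word_le_trans: "word_le x y \<Longrightarrow> word_le y z \<Longrightarrow> word_le x z"
  using word_le_total_and_trans[of x y z] by blast

section \<open>Maximal subsequences of a concatenation\<close>

lemma lex_le_append_dominated:
  assumes "\<forall>t\<in>set T. \<forall>b\<in>set Bs. le b t" and "\<forall>E. subseq E Bs \<longrightarrow> lex_le le E GB"
    and "subseq DB Bs"
  shows "lex_le le DB (T @ GB)"
  using assms(1,3)
proof (induction T arbitrary: DB)
  case Nil
  then show ?case using assms(2) by simp
next
  case (Cons t T)
  note IH = Cons.IH and dom = Cons.prems(1) and sub = Cons.prems(2)
  show ?case
  proof (cases DB)
    case (Cons d DB')
    then have "d \<in> set Bs"
      using set_mono_subseq[OF sub] by auto
    then have "le d t"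
      using dom by simp
    moreover have "lex_le le DB' (T @ GB)"
      using IH dom subseq_Cons'[of d DB' Bs] sub Cons by simp
    ultimately show ?thesis
      using Cons by (auto simp: pequiv_def pstrict_def)
  qed simp
qed

locale total_preorder =
  fixes le :: "'a \<Rightarrow> 'a \<Rightarrow> bool"
  assumes total: "le x y \<or> le y x"
    and trans: "le x y \<Longrightarrow> le y z \<Longrightarrow> le x z"
begin

lemma refl: "le x x"
  using total[of x x] by simp

lemma lex_le_append_below:
  assumes above: "\<forall>t\<in>set T. le b t" and below: "U \<noteq> [] \<Longrightarrow> \<not> le b (hd U)"
    and dominated: "\<forall>x\<in>set Bs. le x b" and max: "\<forall>E. subseq E Bs \<longrightarrow> lex_le le E (b # GB)"
    and "lex_le le DA (T @ U)" and sub: "subseq DB Bs"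
  shows "lex_le le (DA @ DB) (T @ b # GB)"
  using above assms(5)
proof (induction T arbitrary: DA)
  case Nil
  show ?case
  proof (cases DA)
    case Nil
    then show ?thesis using max sub by simp
  next
    case (Cons d DA')
    obtain u U' where U: "U = u # U'"
      using Nil.prems(2) Cons by (cases U) simp_all
    then have "le d u"
      using Nil.prems(2) Cons by (auto simp: pstrict_def pequiv_def)
    moreover have "le u b" "\<not> le b u"
      using below total[of u b] U by auto
    ultimately have "pstrict le d b"
      using trans[of d u b] trans[of b d u] unfolding pstrict_def by blast
    then show ?thesis
      using Cons by simp
  qed
next
  case (Cons t T)
  note IH = Cons.IH and above = Cons.prems(1) and DA = Cons.prems(2)
  show ?case
  proof (cases DA)
    case Nil
    have "\<forall>s\<in>set (t # T). \<forall>x\<in>set Bs. le x s"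
      using above dominated trans by blast
    then have "lex_le le DB ((t # T) @ b # GB)"
      using lex_le_append_dominated[OF _ max sub] by blast
    then show ?thesis
      using Nil by simp
  next
    case (Cons d DA')
    then have "pstrict le d t \<or> pequiv le d t \<and> lex_le le DA' (T @ U)"
      using DA by simp
    moreover have "lex_le le DA' (T @ U) \<Longrightarrow> lex_le le (DA' @ DB) (T @ b # GB)"
      using IH above by simp
    ultimately show ?thesis
      using Cons by auto
  qed
qed

lemma lex_max_subseq_append:
  assumes A: "lex_max_subseq le GA As" and B: "lex_max_subseq le GB Bs" "Bs \<noteq> []"
    and above: "\<forall>t\<in>set (take k GA). le (hd GB) t"
    and below: "k < length GA \<Longrightarrow> \<not> le (hd GB) (GA ! k)"
  shows "lex_max_subseq le (take k GA @ GB) (As @ Bs)"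
proof -
  obtain b GB' where GB: "GB = b # GB'"
    using lex_max_subseq_ne[OF B] by (cases GB) auto
  have dominated: "\<forall>x\<in>set Bs. le x b"
    using lex_max_subseq_hd_greatest[OF B(1)] GB by simp
  have max: "\<forall>E. subseq E Bs \<longrightarrow> lex_le le E (b # GB')"
    using B(1) GB unfolding lex_max_subseq_def by simp
  have below': "drop k GA \<noteq> [] \<Longrightarrow> \<not> le b (hd (drop k GA))"
    using below GB by (simp add: hd_drop_conv_nth)
  have "subseq (take k GA) GA"
    by (rule prefix_imp_subseq[OF take_is_prefix])
  then have "subseq (take k GA) As"
    using A unfolding lex_max_subseq_def by (blast intro: subseq_order.trans)
  then have "subseq (take k GA @ GB) (As @ Bs)"
    using B(1) unfolding lex_max_subseq_def by (blast intro: list_emb_append_mono)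
  moreover have "lex_le le D (take k GA @ GB)" if D_sub: "subseq D (As @ Bs)" for D
  proof -
    obtain DA DB where D: "D = DA @ DB" "subseq DA As" "subseq DB Bs"
      using D_sub by (rule subseq_appendE)
    have "lex_le le DA (take k GA @ drop k GA)"
      using A D(2) unfolding lex_max_subseq_def by simp
    then show ?thesis
      using lex_le_append_below[OF above[unfolded GB list.sel] below' dominated max _ D(3)] D(1) GB
      by simp
  qed
  ultimately show ?thesis
    unfolding lex_max_subseq_def by blast
qed

lemma lex_max_subseq_threshold:
  assumes C: "lex_max_subseq le C xs"
    and k: "k = Max ({0} \<union> {i. 1 \<le> i \<and> i \<le> length C \<and> le b (C ! (i - 1))})"
  shows "\<forall>t\<in>set (take k C). le b t" and "k < length C \<Longrightarrow> \<not> le b (C ! k)"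
proof -
  let ?K = "{0} \<union> {i. 1 \<le> i \<and> i \<le> length C \<and> le b (C ! (i - 1))}"
  have fin: "finite ?K"
    by (rule finite_subset[of _ "{0..length C}"]) auto
  have "k \<in> ?K"
    unfolding k using fin by (rule Max_in) simp
  then have k_le: "k \<le> length C" and k_above: "0 < k \<Longrightarrow> le b (C ! (k - 1))"
    by auto
  show "\<forall>t\<in>set (take k C). le b t"
  proof
    fix t assume "t \<in> set (take k C)"
    then obtain i where i: "i < k" "t = C ! i"
      using k_le by (auto simp: in_set_conv_nth)
    show "le b t"
    proof (cases "i = k - 1")
      case False
      then have "le (C ! (k - 1)) (C ! i)"
        using lex_max_subseq_nonincreasing[OF refl C, of i "k - 1"] i k_le by simp
      then show ?thesis
        using k_above i trans by blast
    qed (use k_above i in simp)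
  qed
  show "\<not> le b (C ! k)" if "k < length C"
  proof
    assume "le b (C ! k)"
    then have "Suc k \<in> ?K"
      using that by simp
    then have "Suc k \<le> Max ?K"
      by (rule Max_ge[OF fin])
    then show False
      using k by simp
  qed
qed

end

interpretation word_order: total_preorder word_le
  by unfold_locales (use word_le_total word_le_trans in blast)+

lemma bounded_ic_take: "bounded_ic n g \<Longrightarrow> bounded_ic n (take k g)"
  by (auto simp: bounded_ic_def index_collection_def sorted_wrt_take dest: in_set_takeD)

lemma bounded_ic_append_shift:
  "bounded_ic n g \<Longrightarrow> bounded_ic m h \<Longrightarrow> bounded_ic (n + m) (g @ map (\<lambda>j. n + j) h)"
  by (fastforce simp: bounded_ic_def index_collection_def sorted_wrt_append sorted_wrt_map)

lemma map_nth_append_shift: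
  assumes "bounded_ic (length As) g" and "bounded_ic (length Bs) h"
  shows "map (\<lambda>i. (As @ Bs) ! (i - 1)) (g @ map (\<lambda>j. length As + j) h)
    = map (\<lambda>i. As ! (i - 1)) g @ map (\<lambda>i. Bs ! (i - 1)) h"
proof -
  have "(As @ Bs) ! (i - 1) = As ! (i - 1)" if "i \<in> set g" for i
  proof -
    have "0 < i" "i \<le> length As"
      using assms(1) that by (auto simp: bounded_ic_def index_collection_def)
    then have "i - 1 < length As"
      by linarith
    then show ?thesis
      by (simp add: nth_append)
  qed
  moreover have "(As @ Bs) ! (length As + j - 1) = Bs ! (j - 1)" if "j \<in> set h" for j
    using assms(2) that by (auto simp: bounded_ic_def index_collection_def nth_append)
  ultimately show ?thesis
    by simp
qed

theorem lemma2:
  fixes As Bs :: "nat list list" and g h :: "nat list" and k :: nat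
  assumes "As \<noteq> []" and "Bs \<noteq> []"
    and "bounded_ic (length As) g" and "maximal_ic word_le g As"
    and "bounded_ic (length Bs) h" and "maximal_ic word_le h Bs"
    and "k = Max ({0} \<union> {i. 1 \<le> i \<and> i \<le> length g \<and>
                     word_le (Bs ! (h ! 0 - 1)) (As ! (g ! (i - 1) - 1))})"
  shows "bounded_ic (length As + length Bs) (take k g @ map (\<lambda>j. length As + j) h)
       \<and> maximal_ic word_le (take k g @ map (\<lambda>j. length As + j) h) (As @ Bs)"
proof -
  define GA where "GA = map (\<lambda>i. As ! (i - 1)) g"
  define GB where "GB = map (\<lambda>i. Bs ! (i - 1)) h"
  have A: "lex_max_subseq word_le GA As" and B: "lex_max_subseq word_le GB Bs"
    using assms(4,6) by (simp_all add: maximal_ic_def GA_def GB_def)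
  have "GB \<noteq> []"
    using lex_max_subseq_ne[OF B assms(2)] .
  then have "hd GB = Bs ! (h ! 0 - 1)"
    by (cases h) (simp_all add: GB_def)
  then have "k = Max ({0} \<union> {i. 1 \<le> i \<and> i \<le> length GA \<and> word_le (hd GB) (GA ! (i - 1))})"
    unfolding assms(7) by (intro arg_cong[where f = Max] arg_cong2[where f = "(\<union>)"] Collect_cong refl)
      (auto simp: GA_def)
  then have "lex_max_subseq word_le (take k GA @ GB) (As @ Bs)"
    using word_order.lex_max_subseq_threshold[OF A]
    by (intro word_order.lex_max_subseq_append[OF A B assms(2)])
  moreover have "bounded_ic (length As + length Bs) (take k g @ map (\<lambda>j. length As + j) h)"
    using bounded_ic_append_shift[OF bounded_ic_take[OF assms(3)] assms(5)] .
  moreover have "map (\<lambda>i. (As @ Bs) ! (i - 1)) (take k g @ map (\<lambda>j. length As + j) h)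
      = take k GA @ GB"
    using map_nth_append_shift[OF bounded_ic_take[OF assms(3)] assms(5)]
    by (simp add: GA_def GB_def take_map)
  ultimately show ?thesis
    by (simp add: maximal_ic_def)
qed

end
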